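(* Let $p>1$, $q=\frac p{p-1}$, and let $f$ be a non-zero real smooth function on $\mathbb R^n$ with compact support. Then \[ K_f=\Big((n+p)\operatorname{vol}(L_f)\,a_1\Big)^{\frac1p}\,\ell_q^{-\frac1p}\ \Gamma_pL_f . \]
   Context: $\omega_k=\pi^{k/2}/\Gamma(\frac k2+1)$. For $\xi\in\mathbb R^n$, $\nabla_\xi f=\nabla f\cdot\xi$ and $\|\nabla_\xi f\|_p$ is its $L^p(\mathbb R^n)$ norm. $C_f^*(x)=\int_{\mathbb S^{n-1}}\|\nabla_\xi f\|_p^{-n-p}|\langle x,\xi\rangle|^p\,d\xi$, $C_f$ is its Legendre transform $C_f(y)=\sup_x\{\langle x,y\rangle-C_f^*(x)\}$, $K_f=\{x:C_f(x)\le1\}$, $L_f=\{\xi:\|\nabla_\xi f\|_p\le1\}$, $\ell_q=q^{-p/q}p^{-1}$. The $L_p$-centroid body $\Gamma_pK$ of a convex body $K$ has support function given by $h_{\Gamma_pK}(x)^p=\frac{1}{a_1\operatorname{vol}(K)}\int_K|\langle x,y\rangle|^pdy$, with $a_1=\frac{\omega_{n+p}}{\omega_2\omega_n\omega_{p-1}}$. *)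

theory Defs
  imports "HOL-Analysis.Analysis"
begin

coinductive smooth_fun :: "('a::euclidean_space \<Rightarrow> real) \<Rightarrow> bool" where
  "(\<forall>x. f differentiable (at x)) \<Longrightarrow>
   (\<forall>v. smooth_fun (\<lambda>x. frechet_derivative f (at x) v)) \<Longrightarrow> smooth_fun f"

text \<open>Volume of the unit ball in dimension k (k real): omega_k = pi^(k/2) / Gamma(k/2+1).\<close>
definition omega :: "real \<Rightarrow> real" where
  "omega k = pi powr (k / 2) / Gamma (k / 2 + 1)"

text \<open>Integral over the unit sphere S^{n-1} w.r.t. the standard (n-1)-dim. surface measure,
  expressed via the cone-measure identity: int_S g dsigma = n * int_{B^n} g(x/|x|) dx.\<close>
definition sphere_integral :: "('a::euclidean_space \<Rightarrow> real) \<Rightarrow> real" where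
  "sphere_integral g = real DIM('a) * (\<integral>x\<in>ball 0 1. g (x /\<^sub>R norm x) \<partial>lborel)"

definition dir_deriv :: "('a::euclidean_space \<Rightarrow> real) \<Rightarrow> 'a \<Rightarrow> 'a \<Rightarrow> real" where
  "dir_deriv f \<xi> x = frechet_derivative f (at x) \<xi>"

definition grad_norm :: "real \<Rightarrow> ('a::euclidean_space \<Rightarrow> real) \<Rightarrow> 'a \<Rightarrow> real" where
  "grad_norm p f \<xi> = (\<integral>x. \<bar>dir_deriv f \<xi> x\<bar> powr p \<partial>lborel) powr (1 / p)"

definition Cstar :: "real \<Rightarrow> ('a::euclidean_space \<Rightarrow> real) \<Rightarrow> 'a \<Rightarrow> real" where
  "Cstar p f x = sphere_integral (\<lambda>\<xi>. grad_norm p f \<xi> powr (- real DIM('a) - p) * \<bar>x \<bullet> \<xi>\<bar> powr p)"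

definition Cf :: "real \<Rightarrow> ('a::euclidean_space \<Rightarrow> real) \<Rightarrow> 'a \<Rightarrow> ereal" where
  "Cf p f y = (SUP x. ereal (x \<bullet> y - Cstar p f x))"

definition Kf :: "real \<Rightarrow> ('a::euclidean_space \<Rightarrow> real) \<Rightarrow> 'a set" where
  "Kf p f = {x. Cf p f x \<le> 1}"

definition Lf :: "real \<Rightarrow> ('a::euclidean_space \<Rightarrow> real) \<Rightarrow> 'a set" where
  "Lf p f = {\<xi>. grad_norm p f \<xi> \<le> 1}"

definition ell :: "real \<Rightarrow> real \<Rightarrow> real" where
  "ell p q = q powr (- p / q) / p"

definition a1 :: "real \<Rightarrow> nat \<Rightarrow> real" where
  "a1 p n = omega (real n + p) / (omega 2 * omega (real n) * omega (p - 1))"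

definition centroid_support :: "real \<Rightarrow> 'a::euclidean_space set \<Rightarrow> 'a \<Rightarrow> real" where
  "centroid_support p K x =
     ((\<integral>y\<in>K. \<bar>x \<bullet> y\<bar> powr p \<partial>lborel) / (a1 p DIM('a) * measure lborel K)) powr (1 / p)"

definition Lp_centroid_body :: "real \<Rightarrow> 'a::euclidean_space set \<Rightarrow> 'a set" where
  "Lp_centroid_body p K = {y. \<forall>x. x \<bullet> y \<le> centroid_support p K x}"

end

theory Submission
  imports Defs
begin

text \<open>In polar coordinates adapted to the gauge \<open>\<xi> \<mapsto> \<parallel>\<nabla>\<^sub>\<xi>f\<parallel>\<^sub>p\<close>, whose unit ball is
  \<open>L\<^sub>f\<close>, the cone-measure integral defining \<open>C\<^sub>f\<^sup>*(x)\<close> becomes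
  \<open>(n + p) \<integral>\<^bsub>L\<^sub>f\<^esub> \<bar>\<langle>x, y\<rangle>\<bar>\<^sup>p dy = c h(x)\<^sup>p\<close>, where \<open>h\<close> is the support function of
  \<open>\<Gamma>\<^sub>pL\<^sub>f\<close> and \<open>c = (n + p) vol(L\<^sub>f) a\<^sub>1\<close>. For a nonnegative, positively 1-homogeneous
  \<open>h\<close>, Young's inequality shows that \<open>\<langle>x, y\<rangle> \<le> \<lambda> h(x)\<close> for all \<open>x\<close> implies
  \<open>\<langle>x, y\<rangle> - c h(x)\<^sup>p \<le> 1\<close> for all \<open>x\<close>, where \<open>\<lambda> = c^(1/p) \<ell>\<^sub>q^(-1/p)\<close>; testing the latter at the
  optimal multiple of \<open>x\<close> gives the converse. Hence \<open>K\<^sub>f\<close>, the unit sublevel set of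
  the Legendre transform of \<open>c h\<^sup>p\<close>, is \<open>\<lambda> \<Gamma>\<^sub>pL\<^sub>f\<close>.\<close>

section \<open>Gauges and polar integration\<close>

lemma nn_integral_lborel_scaleR:
  fixes g :: "'a::euclidean_space \<Rightarrow> ennreal"
  assumes [measurable]: "g \<in> borel_measurable borel" and "t > 0"
  shows "(\<integral>\<^sup>+y. g y \<partial>lborel) = ennreal (t ^ DIM('a)) * (\<integral>\<^sup>+u. g (t *\<^sub>R u) \<partial>lborel)"
proof -
  have "(lborel::'a measure) = density (distr lborel borel (\<lambda>x. 0 + t *\<^sub>R x)) (\<lambda>_. \<bar>t\<bar> ^ DIM('a))"
    by (rule lborel_affine) (use \<open>t > 0\<close> in simp)
  from arg_cong[OF this, of "\<lambda>M. integral\<^sup>N M g"]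
  have "(\<integral>\<^sup>+y. g y \<partial>lborel) = (\<integral>\<^sup>+u. ennreal (t ^ DIM('a)) * g (t *\<^sub>R u) \<partial>lborel)"
    using \<open>t > 0\<close> by (simp add: nn_integral_density nn_integral_distr)
  then show ?thesis
    by (simp add: nn_integral_cmult)
qed

lemma nn_integral_Icc_powr:
  fixes a e :: real
  assumes "a \<ge> 0" and "e > 0"
  shows "(\<integral>\<^sup>+t. ennreal (indicator {0..a} t * (e * t powr (e - 1))) \<partial>lborel) = ennreal (a powr e)"
proof -
  have "(\<integral>\<^sup>+t. ennreal (indicator {0..a} t * t powr (e - 1)) \<partial>lborel) = ennreal (a powr e / e)"
    using nn_integral_has_integral_lebesgue[OF _ has_integral_powr_from_0[of "e - 1" a]] assms
    by simp
  then have "(\<integral>\<^sup>+t. ennreal e * ennreal (indicator {0..a} t * t powr (e - 1)) \<partial>lborel)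
      = ennreal e * ennreal (a powr e / e)"
    by (simp add: nn_integral_cmult)
  then show ?thesis
    using assms by (simp add: ennreal_mult'[symmetric] mult.left_commute)
qed

lemma nn_integral_Ioi_powr:
  fixes a n :: real
  assumes "a > 0" and "n > 0"
  shows "(\<integral>\<^sup>+t. ennreal (indicator {a<..} t * t powr (- n - 1)) \<partial>lborel) = ennreal (a powr (- n) / n)"
proof -
  have "AE t in lborel. ennreal (indicator {a<..} t * t powr (- n - 1)) = ennreal (indicator {a..} t * t powr (- n - 1))"
    using AE_lborel_singleton[of a] by eventually_elim (auto simp: indicator_def)
  then have "(\<integral>\<^sup>+t. ennreal (indicator {a<..} t * t powr (- n - 1)) \<partial>lborel)
      = (\<integral>\<^sup>+t. ennreal (indicator {a..} t * t powr (- n - 1)) \<partial>lborel)"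
    by (rule nn_integral_cong_AE)
  also have "\<dots> = ennreal (a powr (- n) / n)"
    using nn_integral_has_integral_lebesgue[OF _ has_integral_powr_to_inf[of "- n - 1" a]] assms
    by simp
  finally show ?thesis .
qed

context
  fixes N :: "'a::euclidean_space \<Rightarrow> real"
  assumes gauge_continuous: "continuous_on UNIV N"
    and gauge_scaleR: "\<And>c v. N (c *\<^sub>R v) = \<bar>c\<bar> * N v"
    and gauge_pos: "\<And>v. v \<noteq> 0 \<Longrightarrow> N v > 0"
begin

lemma gauge_zero: "N 0 = 0"
  using gauge_scaleR[of 0 0] by simp

lemma gauge_nonneg: "N v \<ge> 0"
  using gauge_pos[of v] gauge_zero by (cases "v = 0") auto

lemma gauge_measurable [measurable]: "N \<in> borel_measurable borel"
  using borel_measurable_continuous_onI[OF gauge_continuous] .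

lemma gauge_sublevel_closed: "closed {v. N v \<le> 1}"
  using closed_Collect_le[OF gauge_continuous continuous_on_const] .

lemma gauge_sublevel_sets [measurable]: "{v. N v \<le> 1} \<in> sets borel"
  using gauge_sublevel_closed by simp

lemma gauge_norm_equivalent:
  "\<exists>m M. m > 0 \<and> M > 0 \<and> (\<forall>v. m * norm v \<le> N v \<and> N v \<le> M * norm v)"
proof -
  have sphere: "compact (sphere (0::'a) 1)" "sphere (0::'a) 1 \<noteq> {}" by auto
  have cont: "continuous_on (sphere 0 1) N"
    using continuous_on_subset[OF gauge_continuous] by blast
  obtain a where a: "a \<in> sphere 0 1" "\<And>u. u \<in> sphere 0 1 \<Longrightarrow> N a \<le> N u"
    using continuous_attains_inf[OF sphere cont] by blast
  obtain b where b: "b \<in> sphere 0 1" "\<And>u. u \<in> sphere 0 1 \<Longrightarrow> N u \<le> N b"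
    using continuous_attains_sup[OF sphere cont] by blast
  have bounds: "N a * norm v \<le> N v \<and> N v \<le> N b * norm v" for v
  proof (cases "v = 0")
    case False
    let ?u = "(1 / norm v) *\<^sub>R v"
    have u: "?u \<in> sphere 0 1" using False by simp
    have "N v = norm v * N ?u"
      using gauge_scaleR[of "norm v" ?u] False by simp
    then show ?thesis using a(2)[OF u] b(2)[OF u] by (simp add: mult.commute[of "norm v"] mult_right_mono)
  qed (simp add: gauge_zero)
  have "N a > 0" "N b > 0"
    using a(1) b(1) by (auto intro!: gauge_pos)
  with bounds show ?thesis
    by blast
qed

lemma measure_gauge_sublevel_pos: "0 < measure lborel {v. N v \<le> 1}"
proof -
  obtain m M where "m > 0" "M > 0" and bounds: "\<And>v. m * norm v \<le> N v \<and> N v \<le> M * norm v"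
    using gauge_norm_equivalent by blast
  have inner: "cball 0 (1 / M) \<subseteq> {v. N v \<le> 1}"
  proof
    fix v :: 'a assume "v \<in> cball 0 (1 / M)"
    then have "M * norm v \<le> 1" using \<open>M > 0\<close> by (simp add: field_simps)
    then show "v \<in> {v. N v \<le> 1}" using bounds[of v] by simp
  qed
  have outer: "{v. N v \<le> 1} \<subseteq> cball 0 (1 / m)"
  proof
    fix v assume "v \<in> {v. N v \<le> 1}"
    then have "m * norm v \<le> 1" using bounds[of v] by simp
    then show "v \<in> cball (0::'a) (1 / m)" using \<open>m > 0\<close> by (simp add: field_simps)
  qed
  have "0 < emeasure lborel (cball (0::'a) (1 / M))"
    using \<open>M > 0\<close> by (simp add: emeasure_cball)
  also have "\<dots> \<le> emeasure lborel {v. N v \<le> 1}"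
    by (rule emeasure_mono[OF inner]) (simp add: gauge_sublevel_closed)
  finally have pos: "0 < emeasure lborel {v. N v \<le> 1}" .
  have "emeasure lborel {v. N v \<le> 1} \<le> emeasure lborel (cball (0::'a) (1 / m))"
    by (rule emeasure_mono[OF outer]) simp
  also have "\<dots> < \<infinity>"
    by (rule emeasure_lborel_cball_finite)
  finally have "emeasure lborel {v. N v \<le> 1} < \<infinity>" .
  with pos show ?thesis
    by (simp add: measure_def enn2real_positive_iff)
qed

context
  fixes \<phi> :: "'a \<Rightarrow> real" and p :: real
  assumes hom_measurable [measurable]: "\<phi> \<in> borel_measurable borel"
    and hom_nonneg: "\<And>v. \<phi> v \<ge> 0"
    and hom_scaleR: "\<And>c v. c > 0 \<Longrightarrow> \<phi> (c *\<^sub>R v) = c powr p * \<phi> v"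
    and hom_degree_pos: "p > 0"
begin

lemma hom_zero: "\<phi> 0 = 0"
proof -
  have "\<phi> 0 = 2 powr p * \<phi> 0"
    using hom_scaleR[of 2 0] by simp
  moreover have "2 powr p \<noteq> (1::real)"
    using hom_degree_pos by simp
  ultimately show ?thesis
    by (simp add: mult_cancel_right1)
qed

lemma gauge_hom_radial:
  fixes d :: real
  assumes "u \<noteq> 0"
  shows "N (u /\<^sub>R norm u) powr (- d - p) * \<phi> (u /\<^sub>R norm u) = N u powr (- d - p) * norm u powr d * \<phi> u"
proof -
  define r where "r = norm u"
  have r: "r > 0" using assms unfolding r_def by simp
  have "N (u /\<^sub>R norm u) = N u * inverse r"
    using gauge_scaleR[of "1 / r" u] r unfolding r_def by (simp add: divide_inverse_commute)
  moreover have "inverse r powr (- d - p) = r powr (d + p)"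
    using r by (simp add: inverse_powr powr_minus[symmetric] add.commute)
  ultimately have "N (u /\<^sub>R norm u) powr (- d - p) = N u powr (- d - p) * r powr (d + p)"
    using r gauge_nonneg[of u] by (simp add: powr_mult)
  moreover have "\<phi> (u /\<^sub>R norm u) = r powr (- p) * \<phi> u"
    using hom_scaleR[of "1 / r" u] r unfolding r_def
    by (simp add: powr_minus_divide divide_inverse_commute inverse_powr powr_minus)
  moreover have "r powr (d + p) * r powr (- p) = r powr d"
    using r by (simp add: powr_add[symmetric])
  ultimately show ?thesis
    unfolding r_def[symmetric] by (metis mult.assoc mult.commute)
qed

lemma nn_integral_gauge_layer:
  "(\<integral>\<^sup>+t. ennreal (indicator {0..1 / N u} t * ((real DIM('a) + p) * t powr (real DIM('a) + p - 1))
        * (indicator (ball 0 1) u * norm u powr real DIM('a) * \<phi> u)) \<partial>lborel)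
   = ennreal (indicator (ball 0 1) u * (N u powr (- real DIM('a) - p) * norm u powr real DIM('a) * \<phi> u))"
proof -
  define d where "d = real DIM('a)"
  define C where "C = indicator (ball 0 1) u * norm u powr d * \<phi> u"
  have C: "C \<ge> 0" unfolding C_def using hom_nonneg by simp
  have "d + p > 0" unfolding d_def using hom_degree_pos by (simp add: add_pos_pos)
  have "(\<integral>\<^sup>+t. ennreal (indicator {0..1 / N u} t * ((d + p) * t powr (d + p - 1)) * C) \<partial>lborel)
      = (\<integral>\<^sup>+t. ennreal (indicator {0..1 / N u} t * ((d + p) * t powr (d + p - 1))) \<partial>lborel) * ennreal C"
    using C by (simp add: ennreal_mult'' nn_integral_multc)
  also have "\<dots> = ennreal ((1 / N u) powr (d + p)) * ennreal C"
    using \<open>d + p > 0\<close> gauge_nonneg[of u] by (simp add: nn_integral_Icc_powr)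
  also have "(1 / N u) powr (d + p) = N u powr (- d - p)"
    using gauge_nonneg[of u] powr_minus_divide[of "N u" "d + p"] by (simp add: powr_divide)
  finally show ?thesis
    using C unfolding d_def[symmetric] C_def by (simp add: ennreal_mult''[symmetric] mult_ac)
qed

lemma gauge_layer_scaleR:
  assumes "t > 0"
  shows "indicator {0..1 / N u} t * ((real DIM('a) + p) * t powr (real DIM('a) + p - 1))
        * (indicator (ball 0 1) u * norm u powr real DIM('a) * \<phi> u)
   = t ^ DIM('a) * (indicator {norm (t *\<^sub>R u)<..} t * ((real DIM('a) + p) * t powr (- real DIM('a) - 1))
        * (indicator {y. N y \<le> 1} (t *\<^sub>R u) * norm (t *\<^sub>R u) powr real DIM('a) * \<phi> (t *\<^sub>R u)))"
proof (cases "u = 0")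
  case False
  define d where "d = real DIM('a)"
  have "N u > 0" using False by (rule gauge_pos)
  have ind1: "indicator {0..1 / N u} t = (indicator {y. N y \<le> 1} (t *\<^sub>R u) :: real)"
    using assms \<open>N u > 0\<close> by (simp add: indicator_def gauge_scaleR field_simps)
  have ind2: "indicator (ball 0 1) u = (indicator {norm (t *\<^sub>R u)<..} t :: real)"
    using assms by (simp add: indicator_def)
  have pow: "t ^ DIM('a) * t powr (- d - 1) * t powr d * t powr p = t powr (d + p - 1)"
    using assms unfolding d_def by (simp add: powr_realpow[symmetric] powr_add[symmetric] powr_diff)
  have "norm (t *\<^sub>R u) powr d = t powr d * norm u powr d" "\<phi> (t *\<^sub>R u) = t powr p * \<phi> u"
    using assms hom_scaleR by (simp_all add: powr_mult)
  then show ?thesis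
    unfolding d_def[symmetric] ind1 ind2 pow[symmetric] by (simp add: mult_ac)
qed simp

lemma nn_integral_gauge_layer_scaleR:
  "(\<integral>\<^sup>+u. ennreal (indicator {0..1 / N u} t * ((real DIM('a) + p) * t powr (real DIM('a) + p - 1))
        * (indicator (ball 0 1) u * norm u powr real DIM('a) * \<phi> u)) \<partial>lborel)
   = (\<integral>\<^sup>+y. ennreal (indicator {norm y<..} t * ((real DIM('a) + p) * t powr (- real DIM('a) - 1))
        * (indicator {y. N y \<le> 1} y * norm y powr real DIM('a) * \<phi> y)) \<partial>lborel)"
  (is "(\<integral>\<^sup>+u. ennreal (?H u) \<partial>lborel) = (\<integral>\<^sup>+y. ennreal (?J y) \<partial>lborel)")
proof (cases "t > 0")
  case True
  have [measurable]: "Measurable.pred borel (\<lambda>y::'a. t \<in> {norm y<..})"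
    by simp
  have "(\<integral>\<^sup>+y. ennreal (?J y) \<partial>lborel) = ennreal (t ^ DIM('a)) * (\<integral>\<^sup>+u. ennreal (?J (t *\<^sub>R u)) \<partial>lborel)"
    by (rule nn_integral_lborel_scaleR[OF _ True]) measurable
  also have "\<dots> = (\<integral>\<^sup>+u. ennreal (t ^ DIM('a)) * ennreal (?J (t *\<^sub>R u)) \<partial>lborel)"
    by (rule nn_integral_cmult[symmetric]) measurable
  also have "\<dots> = (\<integral>\<^sup>+u. ennreal (?H u) \<partial>lborel)"
    by (intro nn_integral_cong, subst gauge_layer_scaleR[OF True]) (use True in \<open>simp add: ennreal_mult'\<close>)
  finally show ?thesis ..
next
  case False
  moreover have "\<not> norm u < t" for u :: 'a
    using False norm_ge_zero[of u] by linarith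
  ultimately have vanish: "?H u = 0" "?J u = 0" for u
    by (auto simp: indicator_def not_less)
  show ?thesis
    by (simp only: vanish)
qed

lemma nn_integral_gauge_shell:
  "(\<integral>\<^sup>+t. ennreal (indicator {norm y<..} t * ((real DIM('a) + p) * t powr (- real DIM('a) - 1))
        * (indicator {y. N y \<le> 1} y * norm y powr real DIM('a) * \<phi> y)) \<partial>lborel)
   = ennreal ((real DIM('a) + p) / real DIM('a) * (indicator {y. N y \<le> 1} y * \<phi> y))"
proof (cases "y = 0")
  case False
  define d where "d = real DIM('a)"
  define C where "C = (d + p) * (indicator {y. N y \<le> 1} y * norm y powr d * \<phi> y)"
  have C: "C \<ge> 0" unfolding C_def d_def using hom_nonneg hom_degree_pos by simp
  have "d > 0" unfolding d_def by simp
  have "(\<integral>\<^sup>+t. ennreal (indicator {norm y<..} t * ((d + p) * t powr (- d - 1))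
        * (indicator {y. N y \<le> 1} y * norm y powr d * \<phi> y)) \<partial>lborel)
      = (\<integral>\<^sup>+t. ennreal (indicator {norm y<..} t * t powr (- d - 1)) * ennreal C \<partial>lborel)"
    by (intro nn_integral_cong, subst ennreal_mult''[symmetric, OF C]) (simp add: C_def mult_ac)
  also have "\<dots> = (\<integral>\<^sup>+t. ennreal (indicator {norm y<..} t * t powr (- d - 1)) \<partial>lborel) * ennreal C"
    by (rule nn_integral_multc) measurable
  also have "\<dots> = ennreal (norm y powr (- d) / d) * ennreal C"
    by (subst nn_integral_Ioi_powr) (use False \<open>d > 0\<close> in auto)
  also have "\<dots> = ennreal (norm y powr (- d) / d * C)"
    by (rule ennreal_mult''[symmetric, OF C])
  also have "norm y powr (- d) / d * C = (d + p) / d * (indicator {y. N y \<le> 1} y * \<phi> y)"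
    using False unfolding C_def by (simp add: powr_minus divide_simps)
  finally show ?thesis unfolding d_def .
qed (simp add: hom_zero)

text \<open>Layer-cake argument: \<open>N(u)^(-n-p) = \<integral> (n + p) t^(n+p-1) dt\<close> over \<open>0 \<le> t \<le> 1/N(u)\<close>. After Fubini,
  the substitution \<open>y = t u\<close> at fixed \<open>t\<close> moves the integral to the sublevel set
  \<open>{N \<le> 1}\<close>, and integrating out \<open>t \<in> (\<bar>y\<bar>, \<infinity>)\<close> yields \<open>(n + p)/n \<bar>y\<bar>^(-n)\<close>, which cancels the
  radial weight \<open>\<bar>y\<bar>\<^sup>n\<close>.\<close>

lemma nn_integral_gauge_polar:
  "ennreal (real DIM('a)) * (\<integral>\<^sup>+u. ennreal (indicator (ball 0 1) u
        * (N (u /\<^sub>R norm u) powr (- real DIM('a) - p) * \<phi> (u /\<^sub>R norm u))) \<partial>lborel)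
   = ennreal (real DIM('a) + p) * (\<integral>\<^sup>+y. ennreal (indicator {y. N y \<le> 1} y * \<phi> y) \<partial>lborel)"
proof -
  define d where "d = real DIM('a)"
  define H where "H t u = ennreal (indicator {0..1 / N u} t * ((d + p) * t powr (d + p - 1))
        * (indicator (ball 0 1) u * norm u powr d * \<phi> u))" for t u
  define J where "J t y = ennreal (indicator {norm y<..} t * ((d + p) * t powr (- d - 1))
        * (indicator {y. N y \<le> 1} y * norm y powr d * \<phi> y))" for t y
  have [measurable]: "Measurable.pred (lborel \<Otimes>\<^sub>M lborel) (\<lambda>(t, u::'a). t \<in> {0..1 / N u})"
    "Measurable.pred (lborel \<Otimes>\<^sub>M lborel) (\<lambda>(t, y::'a). t \<in> {norm y<..})"
    "Measurable.pred (lborel \<Otimes>\<^sub>M lborel) (\<lambda>(t, u::'a). u \<in> ball 0 1)"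
    by simp_all
  have H_meas: "case_prod H \<in> borel_measurable (lborel \<Otimes>\<^sub>M lborel)"
    unfolding H_def by measurable
  have J_meas: "case_prod J \<in> borel_measurable (lborel \<Otimes>\<^sub>M lborel)"
    unfolding J_def by measurable
  have d: "d > 0" unfolding d_def by simp
  have radial: "indicator (ball 0 1) u * (N (u /\<^sub>R norm u) powr (- d - p) * \<phi> (u /\<^sub>R norm u))
      = indicator (ball 0 1) u * (N u powr (- d - p) * norm u powr d * \<phi> u)" for u
    using gauge_hom_radial[of u d] d by (cases "u = 0") (simp_all add: hom_zero)
  have "(\<integral>\<^sup>+u. ennreal (indicator (ball 0 1) u * (N (u /\<^sub>R norm u) powr (- d - p) * \<phi> (u /\<^sub>R norm u))) \<partial>lborel)
      = (\<integral>\<^sup>+u. ennreal (indicator (ball 0 1) u * (N u powr (- d - p) * norm u powr d * \<phi> u)) \<partial>lborel)"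
    by (simp only: radial)
  also have "\<dots> = (\<integral>\<^sup>+u. (\<integral>\<^sup>+t. H t u \<partial>lborel) \<partial>lborel)"
    unfolding H_def d_def by (simp only: nn_integral_gauge_layer)
  also have "\<dots> = (\<integral>\<^sup>+t. (\<integral>\<^sup>+u. H t u \<partial>lborel) \<partial>lborel)"
    by (rule lborel_pair.Fubini'[OF H_meas])
  also have "\<dots> = (\<integral>\<^sup>+t. (\<integral>\<^sup>+y. J t y \<partial>lborel) \<partial>lborel)"
    unfolding H_def J_def d_def by (simp only: nn_integral_gauge_layer_scaleR)
  also have "\<dots> = (\<integral>\<^sup>+y. (\<integral>\<^sup>+t. J t y \<partial>lborel) \<partial>lborel)"
    by (rule lborel_pair.Fubini'[OF J_meas, symmetric])
  also have "\<dots> = (\<integral>\<^sup>+y. ennreal ((d + p) / d) * ennreal (indicator {y. N y \<le> 1} y * \<phi> y) \<partial>lborel)"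
    unfolding J_def d_def using hom_degree_pos
    by (simp only: nn_integral_gauge_shell ennreal_mult' divide_nonneg_nonneg)
  also have "\<dots> = ennreal ((d + p) / d) * (\<integral>\<^sup>+y. ennreal (indicator {y. N y \<le> 1} y * \<phi> y) \<partial>lborel)"
    by (rule nn_integral_cmult) measurable
  finally show ?thesis
    using d hom_degree_pos unfolding d_def[symmetric]
    by (simp add: mult.assoc[symmetric] ennreal_mult'[symmetric])
qed

lemma gauge_polar_integral:
  "real DIM('a) * (LINT u:ball 0 1|lborel. N (u /\<^sub>R norm u) powr (- real DIM('a) - p) * \<phi> (u /\<^sub>R norm u))
   = (real DIM('a) + p) * (LINT y:{y. N y \<le> 1}|lborel. \<phi> y)"
proof -
  have [measurable]: "Measurable.pred borel (\<lambda>u::'a. u \<in> ball 0 1)"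
    by simp
  have "(LINT u:ball 0 1|lborel. N (u /\<^sub>R norm u) powr (- real DIM('a) - p) * \<phi> (u /\<^sub>R norm u))
      = enn2real (\<integral>\<^sup>+u. ennreal (indicator (ball 0 1) u
          * (N (u /\<^sub>R norm u) powr (- real DIM('a) - p) * \<phi> (u /\<^sub>R norm u))) \<partial>lborel)"
    unfolding set_lebesgue_integral_def
    by (subst integral_eq_nn_integral) (auto simp: hom_nonneg)
  moreover have "(LINT y:{y. N y \<le> 1}|lborel. \<phi> y)
      = enn2real (\<integral>\<^sup>+y. ennreal (indicator {y. N y \<le> 1} y * \<phi> y) \<partial>lborel)"
    unfolding set_lebesgue_integral_def
    by (subst integral_eq_nn_integral) (auto simp: hom_nonneg)
  ultimately show ?thesis
    using arg_cong[OF nn_integral_gauge_polar, of enn2real] hom_degree_pos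
    by (simp add: enn2real_mult)
qed

end

end

section \<open>The Legendre transform of a power of a homogeneous function\<close>

lemma ell_powr_neg_inv:
  assumes "p > 1" and "q = p / (p - 1)"
  shows "ell p q powr (- 1 / p) = p powr (1 / p) * q powr (1 / q)"
proof -
  have "q > 0" using assms by simp
  have "ell p q powr (- 1 / p) = (q powr (- p / q)) powr (- 1 / p) / p powr (- 1 / p)"
    unfolding ell_def using assms \<open>q > 0\<close> by (intro powr_divide)
  also have "(q powr (- p / q)) powr (- 1 / p) = q powr (1 / q)"
    using assms(1) by (simp add: powr_powr)
  also have "p powr (- 1 / p) = 1 / p powr (1 / p)"
    using powr_minus_divide[of p "1 / p"] by simp
  finally show ?thesis by simp
qed

lemma young_powr_bound:
  fixes c s :: real
  assumes p: "p > 1" and q: "q = p / (p - 1)" and "c > 0" and "s \<ge> 0"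
  shows "(c * p) powr (1 / p) * q powr (1 / q) * s - c * s powr p \<le> 1"
proof -
  have "q > 1" using p q by (simp add: less_divide_eq)
  have "1 / q = (p - 1) / p" using p q by simp
  then have pq: "1 / p + 1 / q = 1" using p by (simp add: field_simps)
  define a where "a = (c * p) powr (1 / p) * s"
  define b where "b = q powr (1 / q)"
  have "a * b \<le> a powr p / p + b powr q / q"
    by (rule Youngs_inequality[OF p \<open>q > 1\<close> pq]) (use \<open>s \<ge> 0\<close> in \<open>simp_all add: a_def b_def\<close>)
  moreover have "a powr p = c * p * s powr p"
    unfolding a_def using p \<open>c > 0\<close> \<open>s \<ge> 0\<close> by (simp add: powr_mult powr_powr)
  moreover have "b powr q = q"
    unfolding b_def using \<open>q > 1\<close> by (simp add: powr_powr)
  ultimately show ?thesis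
    using p \<open>q > 1\<close> by (simp add: a_def b_def mult_ac)
qed

lemma young_powr_bound_attained:
  fixes c :: real
  assumes p: "p > 1" and q: "q = p / (p - 1)" and "c > 0"
  defines "s \<equiv> (c * (p - 1)) powr (- 1 / p)"
  shows "s > 0" and "(c * p) powr (1 / p) * q powr (1 / q) * s = c * s powr p + 1"
proof -
  show "s > 0" unfolding s_def using \<open>c > 0\<close> p by simp
  have "q > 1" using p q by (simp add: less_divide_eq)
  have "1 / q = (p - 1) / p" using p q by simp
  then have "1 / p + 1 / q = 1" using p by (simp add: field_simps)
  have "s powr p = (c * (p - 1)) powr (- 1 / p * p)"
    unfolding s_def by (rule powr_powr)
  also have "\<dots> = 1 / (c * (p - 1))"
    using \<open>c > 0\<close> p by (simp add: powr_minus_divide)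
  finally have "c * s powr p = 1 / (p - 1)"
    using \<open>c > 0\<close> by simp
  moreover have "(c * p) powr (1 / p) * s = q powr (1 / p)"
  proof -
    have "(c * p) powr (1 / p) * s = (c * p) powr (1 / p) / (c * (p - 1)) powr (1 / p)"
      unfolding s_def by (simp add: powr_minus_divide)
    also have "\<dots> = (c * p / (c * (p - 1))) powr (1 / p)"
      using \<open>c > 0\<close> p by (intro powr_divide[symmetric])
    finally show ?thesis using \<open>c > 0\<close> q by simp
  qed
  ultimately have "(c * p) powr (1 / p) * q powr (1 / q) * s = q powr (1 / p) * q powr (1 / q)"
    by (simp add: mult_ac)
  also have "\<dots> = q"
    using \<open>1 / p + 1 / q = 1\<close> \<open>q > 1\<close> by (simp add: powr_add[symmetric])
  also have "q = 1 / (p - 1) + 1"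
    using p q by (simp add: field_simps)
  also have "\<dots> = c * s powr p + 1"
    using \<open>c * s powr p = 1 / (p - 1)\<close> by simp
  finally show "(c * p) powr (1 / p) * q powr (1 / q) * s = c * s powr p + 1" .
qed

lemma legendre_powr_sublevel_eq:
  fixes h :: "'a::real_inner \<Rightarrow> real"
  assumes p: "p > 1" and q: "q = p / (p - 1)" and "c > 0"
    and h_nonneg: "\<And>x. h x \<ge> 0" and h_scaleR: "\<And>t x. t > 0 \<Longrightarrow> h (t *\<^sub>R x) = t * h x"
  shows "(\<forall>x. x \<bullet> y - c * h x powr p \<le> 1) \<longleftrightarrow> (\<forall>x. x \<bullet> y \<le> c powr (1 / p) * ell p q powr (- 1 / p) * h x)"
proof -
  define lam where "lam = (c * p) powr (1 / p) * q powr (1 / q)"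
  have "c powr (1 / p) * ell p q powr (- 1 / p) = lam"
    unfolding ell_powr_neg_inv[OF p q] lam_def using \<open>c > 0\<close> p by (simp add: powr_mult mult_ac)
  moreover have "(\<forall>x. x \<bullet> y - c * h x powr p \<le> 1) \<longleftrightarrow> (\<forall>x. x \<bullet> y \<le> lam * h x)"
  proof safe
    fix x assume "\<forall>x. x \<bullet> y \<le> lam * h x"
    then have "x \<bullet> y - c * h x powr p \<le> lam * h x - c * h x powr p" by simp
    also have "\<dots> \<le> 1"
      unfolding lam_def by (rule young_powr_bound[OF p q \<open>c > 0\<close> h_nonneg])
    finally show "x \<bullet> y - c * h x powr p \<le> 1" .
  next
    fix x assume le1: "\<forall>x. x \<bullet> y - c * h x powr p \<le> 1"
    show "x \<bullet> y \<le> lam * h x"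
    proof (cases "h x = 0")
      case True
      show ?thesis
      proof (rule ccontr)
        assume "\<not> x \<bullet> y \<le> lam * h x"
        then have "x \<bullet> y > 0" using True by simp
        then have "(2 / (x \<bullet> y)) *\<^sub>R x \<bullet> y - c * h ((2 / (x \<bullet> y)) *\<^sub>R x) powr p = 2"
          using True h_scaleR[of "2 / (x \<bullet> y)" x] by simp
        then show False
          using le1[rule_format, of "(2 / (x \<bullet> y)) *\<^sub>R x"] by simp
      qed
    next
      case False
      with h_nonneg[of x] have "h x > 0" by simp
      define s where "s = (c * (p - 1)) powr (- 1 / p)"
      have "s > 0" and lam_s: "lam * s = c * s powr p + 1"
        using young_powr_bound_attained[OF p q \<open>c > 0\<close>] unfolding s_def lam_def by auto
      have "h ((s / h x) *\<^sub>R x) = s"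
        using h_scaleR[of "s / h x" x] \<open>s > 0\<close> \<open>h x > 0\<close> by simp
      then have "s / h x * (x \<bullet> y) \<le> lam * s"
        using le1[rule_format, of "(s / h x) *\<^sub>R x"] lam_s by simp
      then show ?thesis
        using \<open>s > 0\<close> \<open>h x > 0\<close> by (simp add: field_simps)
    qed
  qed
  ultimately show ?thesis by simp
qed

section \<open>The support function of the \<open>L\<^sub>p\<close> centroid body\<close>

lemma omega_pos: "k > -2 \<Longrightarrow> omega k > 0"
  unfolding omega_def by (intro divide_pos_pos Gamma_real_pos) auto

lemma a1_pos: "p > 0 \<Longrightarrow> a1 p n > 0"
  unfolding a1_def by (intro divide_pos_pos mult_pos_pos omega_pos) auto

lemma centroid_support_nonneg: "centroid_support p K x \<ge> 0"
  unfolding centroid_support_def by simp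

lemma centroid_support_radicand_nonneg:
  fixes K :: "'a::euclidean_space set"
  assumes "p > 0"
  shows "(LINT y:K|lborel. \<bar>x \<bullet> y\<bar> powr p) / (a1 p DIM('a) * measure lborel K) \<ge> 0"
  unfolding set_lebesgue_integral_def using a1_pos[OF assms]
  by (intro divide_nonneg_nonneg integral_nonneg_AE mult_nonneg_nonneg) (auto simp: indicator_def less_imp_le)

lemma centroid_support_powr:
  fixes K :: "'a::euclidean_space set"
  assumes "p > 0"
  shows "centroid_support p K x powr p
    = (LINT y:K|lborel. \<bar>x \<bullet> y\<bar> powr p) / (a1 p DIM('a) * measure lborel K)"
proof -
  have "centroid_support p K x powr p
      = ((LINT y:K|lborel. \<bar>x \<bullet> y\<bar> powr p) / (a1 p DIM('a) * measure lborel K)) powr (1 / p * p)"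
    unfolding centroid_support_def by (rule powr_powr)
  also have "1 / p * p = 1"
    using assms by simp
  finally show ?thesis
    by (simp only: powr_one[OF centroid_support_radicand_nonneg[OF assms]])
qed

lemma centroid_support_scaleR:
  fixes K :: "'a::euclidean_space set"
  assumes "p > 0" and "t > 0"
  shows "centroid_support p K (t *\<^sub>R x) = t * centroid_support p K x"
proof -
  define A where "A = (LINT y:K|lborel. \<bar>x \<bullet> y\<bar> powr p) / (a1 p DIM('a) * measure lborel K)"
  have "A \<ge> 0"
    unfolding A_def by (rule centroid_support_radicand_nonneg[OF assms(1)])
  have "(LINT y:K|lborel. \<bar>(t *\<^sub>R x) \<bullet> y\<bar> powr p) = t powr p * (LINT y:K|lborel. \<bar>x \<bullet> y\<bar> powr p)"
    using assms(2) by (simp add: abs_mult powr_mult set_integral_mult_right)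
  then have "centroid_support p K (t *\<^sub>R x) = (t powr p * A) powr (1 / p)"
    unfolding centroid_support_def A_def by simp
  also have "\<dots> = t * A powr (1 / p)"
    using assms \<open>A \<ge> 0\<close> by (simp add: powr_mult powr_powr)
  finally show ?thesis
    unfolding centroid_support_def A_def .
qed

lemma scaleR_Lp_centroid_body:
  assumes "lam > 0"
  shows "(\<lambda>y. lam *\<^sub>R y) ` Lp_centroid_body p K = {y. \<forall>x. x \<bullet> y \<le> lam * centroid_support p K x}"
proof safe
  fix z x assume "z \<in> Lp_centroid_body p K"
  then show "x \<bullet> (lam *\<^sub>R z) \<le> lam * centroid_support p K x"
    using assms unfolding Lp_centroid_body_def by (simp add: mult_left_mono)
next
  fix y assume "\<forall>x. x \<bullet> y \<le> lam * centroid_support p K x"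
  then have "(1 / lam) *\<^sub>R y \<in> Lp_centroid_body p K"
    using assms unfolding Lp_centroid_body_def by (simp add: divide_le_eq mult.commute)
  moreover have "y = lam *\<^sub>R ((1 / lam) *\<^sub>R y)"
    using assms by simp
  ultimately show "y \<in> (\<lambda>y. lam *\<^sub>R y) ` Lp_centroid_body p K"
    by blast
qed

section \<open>Smooth functions with compact support\<close>

lemma smooth_fun_differentiable: "smooth_fun f \<Longrightarrow> f differentiable (at x)"
  by (erule smooth_fun.cases) auto

lemma smooth_fun_frechet_derivative: "smooth_fun f \<Longrightarrow> smooth_fun (\<lambda>x. frechet_derivative f (at x) v)"
  by (erule smooth_fun.cases) auto

lemma smooth_fun_continuous: "smooth_fun f \<Longrightarrow> continuous_on UNIV f"
  by (meson continuous_at_imp_continuous_on differentiable_imp_continuous_within smooth_fun_differentiable)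

lemma smooth_fun_has_derivative: "smooth_fun f \<Longrightarrow> (f has_derivative frechet_derivative f (at x)) (at x)"
  using frechet_derivative_works smooth_fun_differentiable by blast

lemma frechet_derivative_outside_support:
  fixes f :: "'a::real_normed_vector \<Rightarrow> 'b::real_normed_vector"
  assumes "x \<notin> closure {x. f x \<noteq> 0}"
  shows "frechet_derivative f (at x) = (\<lambda>_. 0)"
proof -
  have vanish: "0 = f y" if "y \<in> - closure {x. f x \<noteq> 0}" for y
    using that closure_subset by (metis (mono_tags, lifting) Compl_iff mem_Collect_eq subsetD)
  have "(f has_derivative (\<lambda>_. 0)) (at x)"
    by (rule has_derivative_transform_within_open[OF has_derivative_const open_Compl[OF closed_closure] _ vanish])
      (use assms in simp)
  then show ?thesis
    by (rule frechet_derivative_at[symmetric])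
qed

lemma eq_0_if_directional_derivative_eq_0:
  fixes f :: "'a::real_normed_vector \<Rightarrow> real"
  assumes deriv: "\<And>x. (f has_derivative f' x) (at x)" and dir: "\<And>x. f' x v = 0"
    and "bounded {x. f x \<noteq> 0}" and "v \<noteq> 0"
  shows "f x = 0"
proof -
  have "((\<lambda>t. f (x + t *\<^sub>R v)) has_derivative (\<lambda>_. 0)) (at t within UNIV)" for t
  proof -
    have "((\<lambda>t. x + t *\<^sub>R v) has_derivative (\<lambda>s. s *\<^sub>R v)) (at t)"
      by (intro derivative_eq_intros) auto
    from has_derivative_compose[OF this deriv]
    have "((\<lambda>t. f (x + t *\<^sub>R v)) has_derivative (\<lambda>s. f' (x + t *\<^sub>R v) (s *\<^sub>R v))) (at t)"
      by (simp add: o_def)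
    moreover have "f' (x + t *\<^sub>R v) (s *\<^sub>R v) = 0" for s
      using linear_scale[OF has_derivative_linear[OF deriv]] dir by simp
    ultimately show ?thesis by simp
  qed
  then obtain c where const: "\<And>t. f (x + t *\<^sub>R v) = c"
    using has_derivative_zero_constant[of UNIV "\<lambda>t. f (x + t *\<^sub>R v)"] by auto
  obtain R where R: "\<And>y. f y \<noteq> 0 \<Longrightarrow> norm y \<le> R"
    using \<open>bounded {x. f x \<noteq> 0}\<close> by (auto simp: bounded_iff)
  define t where "t = (\<bar>R\<bar> + norm x + 1) / norm v"
  have "norm (t *\<^sub>R v) = \<bar>R\<bar> + norm x + 1"
    unfolding t_def using \<open>v \<noteq> 0\<close> by simp
  then have "norm (x + t *\<^sub>R v) > R"
    using norm_triangle_ineq2[of "t *\<^sub>R v" "- x"] by (simp add: add.commute)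
  then have "f (x + t *\<^sub>R v) = 0"
    using R[of "x + t *\<^sub>R v"] by fastforce
  then show ?thesis
    using const[of 0] const[of t] by simp
qed

locale smooth_compact_support =
  fixes f :: "'a::euclidean_space \<Rightarrow> real" and p :: real
  assumes exponent_pos: "p > 0" and smooth: "smooth_fun f"
    and compact_support: "compact (closure {x. f x \<noteq> 0})" and nonzero: "\<exists>x. f x \<noteq> 0"
begin

lemma dir_deriv_bounded_linear: "bounded_linear (\<lambda>v. dir_deriv f v x)"
  unfolding dir_deriv_def using has_derivative_bounded_linear[OF smooth_fun_has_derivative[OF smooth]] .

lemma dir_deriv_outside_support: "x \<notin> closure {x. f x \<noteq> 0} \<Longrightarrow> dir_deriv f v x = 0"
  unfolding dir_deriv_def by (simp add: frechet_derivative_outside_support)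

lemma dir_deriv_continuous: "continuous_on UNIV (dir_deriv f v)"
  unfolding dir_deriv_def[abs_def] using smooth_fun_continuous[OF smooth_fun_frechet_derivative[OF smooth]] .

lemma dir_deriv_eq_sum_Basis: "dir_deriv f v x = (\<Sum>b\<in>Basis. (v \<bullet> b) * dir_deriv f b x)"
proof -
  interpret bounded_linear "\<lambda>v. dir_deriv f v x" by (rule dir_deriv_bounded_linear)
  have "dir_deriv f v x = dir_deriv f (\<Sum>b\<in>Basis. (v \<bullet> b) *\<^sub>R b) x"
    by (simp add: euclidean_representation)
  also have "\<dots> = (\<Sum>b\<in>Basis. (v \<bullet> b) * dir_deriv f b x)"
    by (simp add: sum scale)
  finally show ?thesis .
qed

lemma dir_deriv_bound: "\<exists>M\<ge>0. \<forall>x v. \<bar>dir_deriv f v x\<bar> \<le> M * norm v"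
proof -
  let ?g = "\<lambda>x. \<Sum>b\<in>Basis. \<bar>dir_deriv f b x\<bar>"
  have "continuous_on UNIV ?g" by (intro continuous_intros dir_deriv_continuous)
  from compact_continuous_image[OF continuous_on_subset[OF this subset_UNIV] compact_support]
  obtain M where "M > 0" and M: "\<forall>y\<in>?g ` closure {x. f x \<noteq> 0}. norm y \<le> M"
    by (meson bounded_pos compact_imp_bounded)
  have "?g x \<le> M" for x
  proof (cases "x \<in> closure {x. f x \<noteq> 0}")
    case True
    then show ?thesis using M by fastforce
  qed (use \<open>M > 0\<close> dir_deriv_outside_support in simp)
  have "\<bar>dir_deriv f v x\<bar> \<le> M * norm v" for x v
  proof -
    have "\<bar>dir_deriv f v x\<bar> \<le> (\<Sum>b\<in>Basis. \<bar>(v \<bullet> b) * dir_deriv f b x\<bar>)"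
      by (subst dir_deriv_eq_sum_Basis) (rule sum_abs)
    also have "\<dots> \<le> (\<Sum>b\<in>Basis. norm v * \<bar>dir_deriv f b x\<bar>)"
      by (intro sum_mono) (simp add: abs_mult Basis_le_norm mult_right_mono)
    also have "\<dots> = norm v * ?g x" by (simp add: sum_distrib_left)
    also have "\<dots> \<le> norm v * M" using \<open>?g x \<le> M\<close> by (simp add: mult_left_mono)
    finally show ?thesis by (simp add: mult.commute)
  qed
  then show ?thesis using \<open>M > 0\<close> by (intro exI[of _ M]) auto
qed

lemma dir_deriv_powr_continuous: "continuous_on UNIV (\<lambda>x. \<bar>dir_deriv f v x\<bar> powr p)"
  using exponent_pos by (intro continuous_on_powr' continuous_intros dir_deriv_continuous) auto

lemma dir_deriv_powr_integrable: "integrable lborel (\<lambda>x. \<bar>dir_deriv f v x\<bar> powr p)"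
proof -
  have int: "integrable lborel (\<lambda>x. indicator (closure {x. f x \<noteq> 0}) x *\<^sub>R \<bar>dir_deriv f v x\<bar> powr p)"
    by (rule borel_integrable_compact[OF compact_support continuous_on_subset[OF dir_deriv_powr_continuous]]) simp
  have "indicator (closure {x. f x \<noteq> 0}) x *\<^sub>R \<bar>dir_deriv f v x\<bar> powr p
      = \<bar>dir_deriv f v x\<bar> powr p" for x
    by (cases "x \<in> closure {x. f x \<noteq> 0}") (simp_all add: dir_deriv_outside_support)
  with int show ?thesis by (simp only:)
qed

definition grad_energy :: "'a \<Rightarrow> real" where
  "grad_energy v = (\<integral>x. \<bar>dir_deriv f v x\<bar> powr p \<partial>lborel)"

lemma grad_norm_eq_grad_energy: "grad_norm p f v = grad_energy v powr (1 / p)"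
  unfolding grad_norm_def grad_energy_def ..

lemma grad_energy_nonneg: "grad_energy v \<ge> 0"
  unfolding grad_energy_def by simp

lemma grad_energy_scaleR: "grad_energy (c *\<^sub>R v) = \<bar>c\<bar> powr p * grad_energy v"
proof -
  have "dir_deriv f (c *\<^sub>R v) x = c * dir_deriv f v x" for x
    using linear_scale[OF bounded_linear.linear[OF dir_deriv_bounded_linear], of c v] by simp
  then show ?thesis
    unfolding grad_energy_def by (simp add: abs_mult powr_mult)
qed

lemma grad_energy_continuous: "continuous_on UNIV grad_energy"
proof -
  obtain M where "M \<ge> 0" and M: "\<And>x v. \<bar>dir_deriv f v x\<bar> \<le> M * norm v"
    using dir_deriv_bound by blast
  have [measurable]: "(\<lambda>x. \<bar>dir_deriv f v x\<bar> powr p) \<in> borel_measurable lborel" for v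
    using borel_measurable_continuous_onI[OF dir_deriv_powr_continuous] by simp
  have "(\<lambda>n. grad_energy (u n)) \<longlonglongrightarrow> grad_energy a" if "u \<longlonglongrightarrow> a" for u a
  proof -
    obtain K where K: "\<And>n. norm (u n) \<le> K"
      using convergent_imp_Bseq[OF convergentI[OF \<open>u \<longlonglongrightarrow> a\<close>]] by (auto simp: Bseq_def)
    define S where "S = closure {x. f x \<noteq> 0}"
    have "\<bar>dir_deriv f (u n) x\<bar> powr p \<le> indicator S x *\<^sub>R (M * K) powr p" for n x
    proof (cases "x \<in> S")
      case True
      have "\<bar>dir_deriv f (u n) x\<bar> \<le> M * K"
        using M[of "u n" x] K[of n] \<open>M \<ge> 0\<close> by (meson mult_left_mono order_trans)
      then show ?thesis using True exponent_pos by (simp add: powr_mono2)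
    qed (simp add: S_def dir_deriv_outside_support)
    moreover have "(\<lambda>n. \<bar>dir_deriv f (u n) x\<bar> powr p) \<longlonglongrightarrow> \<bar>dir_deriv f a x\<bar> powr p" for x
      using bounded_linear.tendsto[OF dir_deriv_bounded_linear \<open>u \<longlonglongrightarrow> a\<close>] exponent_pos
      by (intro tendsto_intros) auto
    moreover have "integrable lborel (\<lambda>x. indicator S x *\<^sub>R (M * K) powr p)"
      unfolding S_def by (rule borel_integrable_compact[OF compact_support]) simp
    ultimately show ?thesis
      unfolding grad_energy_def
      by (intro integral_dominated_convergence[where w = "\<lambda>x. indicator S x *\<^sub>R (M * K) powr p"]) auto
  qed
  then show ?thesis
    by (intro continuous_at_imp_continuous_on ballI continuous_at_sequentiallyI) auto
qed

lemma grad_energy_pos: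
  assumes "v \<noteq> 0"
  shows "grad_energy v > 0"
proof (rule ccontr)
  assume "\<not> grad_energy v > 0"
  then have "grad_energy v = 0" using grad_energy_nonneg[of v] by simp
  then have "AE x in lborel. dir_deriv f v x = 0"
    unfolding grad_energy_def using integral_nonneg_eq_0_iff_AE[OF dir_deriv_powr_integrable] by simp
  then have "AE x \<in> UNIV in lebesgue. x \<in> {x. dir_deriv f v x = 0}"
    by (simp add: AE_completion)
  moreover have "closed {x. dir_deriv f v x = 0}"
    using closed_Collect_eq[OF dir_deriv_continuous continuous_on_const] by simp
  ultimately have "frechet_derivative f (at x) v = 0" for x
    using mem_closed_if_AE_lebesgue_open[OF open_UNIV] unfolding dir_deriv_def by blast
  moreover have "bounded {x. f x \<noteq> 0}"
    using compact_imp_bounded[OF compact_support] bounded_subset closure_subset by blast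
  ultimately have "f x = 0" for x
    using eq_0_if_directional_derivative_eq_0[OF smooth_fun_has_derivative[OF smooth]] assms by blast
  with nonzero show False by blast
qed

lemma grad_norm_continuous: "continuous_on UNIV (grad_norm p f)"
  unfolding grad_norm_eq_grad_energy[abs_def] using exponent_pos grad_energy_nonneg
  by (intro continuous_on_powr' grad_energy_continuous continuous_intros) auto

lemma grad_norm_scaleR: "grad_norm p f (c *\<^sub>R v) = \<bar>c\<bar> * grad_norm p f v"
  using exponent_pos grad_energy_nonneg[of v]
  by (simp add: grad_norm_eq_grad_energy grad_energy_scaleR powr_mult powr_powr)

lemma grad_norm_pos: "v \<noteq> 0 \<Longrightarrow> grad_norm p f v > 0"
  using grad_energy_pos[of v] grad_energy_nonneg[of v] by (simp add: grad_norm_eq_grad_energy)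

lemma measure_Lf_pos: "measure lborel (Lf p f) > 0"
  unfolding Lf_def by (rule measure_gauge_sublevel_pos[OF grad_norm_continuous grad_norm_scaleR grad_norm_pos])

lemma Cstar_eq_centroid_support:
  "Cstar p f x = (real DIM('a) + p) * measure lborel (Lf p f) * a1 p DIM('a)
     * centroid_support p (Lf p f) x powr p"
proof -
  have "\<bar>x \<bullet> (c *\<^sub>R y)\<bar> powr p = c powr p * \<bar>x \<bullet> y\<bar> powr p" if "c > 0" for c y
    using that by (simp add: abs_mult powr_mult)
  from gauge_polar_integral[OF grad_norm_continuous grad_norm_scaleR grad_norm_pos _ _ this exponent_pos]
  have "Cstar p f x = (real DIM('a) + p) * (LINT y:Lf p f|lborel. \<bar>x \<bullet> y\<bar> powr p)"
    unfolding Cstar_def sphere_integral_def Lf_def by simp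
  then show ?thesis
    using centroid_support_powr[OF exponent_pos, of "Lf p f" x] a1_pos[OF exponent_pos, of "DIM('a)"]
      measure_Lf_pos by simp
qed

end

theorem mainTheorem8:
  fixes f :: "'a::euclidean_space \<Rightarrow> real" and p q :: real
  assumes "p > 1" and "q = p / (p - 1)"
    and "smooth_fun f"
    and "compact (closure {x. f x \<noteq> 0})"
    and "\<exists>x. f x \<noteq> 0"
  shows "Kf p f =
    (\<lambda>y. (((real DIM('a) + p) * measure lborel (Lf p f) * a1 p DIM('a)) powr (1 / p)
            * ell p q powr (- 1 / p)) *\<^sub>R y) ` Lp_centroid_body p (Lf p f)"
proof -
  interpret smooth_compact_support f p
    using assms by unfold_locales auto
  define c where "c = (real DIM('a) + p) * measure lborel (Lf p f) * a1 p DIM('a)"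
  have "c > 0"
    unfolding c_def using assms(1) measure_Lf_pos a1_pos[of p] by simp
  have "Kf p f = {y. \<forall>x. x \<bullet> y - c * centroid_support p (Lf p f) x powr p \<le> 1}"
    unfolding Kf_def Cf_def c_def by (simp add: SUP_le_iff Cstar_eq_centroid_support)
  also have "\<dots> = {y. \<forall>x. x \<bullet> y \<le> c powr (1 / p) * ell p q powr (- 1 / p) * centroid_support p (Lf p f) x}"
    using legendre_powr_sublevel_eq[OF assms(1,2) \<open>c > 0\<close> centroid_support_nonneg
        centroid_support_scaleR[OF exponent_pos, of _ "Lf p f"]] by simp
  also have "\<dots> = (\<lambda>y. (c powr (1 / p) * ell p q powr (- 1 / p)) *\<^sub>R y) ` Lp_centroid_body p (Lf p f)"
    using \<open>c > 0\<close> assms by (intro scaleR_Lp_centroid_body[symmetric]) (simp add: ell_def)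
  finally show ?thesis
    unfolding c_def .
qed

end
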